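(* Let $n$ be a positive integer, $f(x)\mid x^n-1$, and $p(x)\in\mathbb{F}_2[x]$ with $\gcd(p(x),x^n-1)=1$; write $p(x)^{-1}$ for the inverse of $p(x)$ modulo $x^n-1$ and $h(x)=\frac{x^n-1}{f(x)}$. Suppose $r(x),s(x),r'(x),s'(x)\in\mathbb{F}_2[x]$ satisfy $$r(x)+p(x)s(x)\equiv h(x)\pmod{x^n-1},\qquad r'(x)+p(x)^{-1}s'(x)\equiv h(x)\pmod{x^n-1},$$ and let $d$ be the minimum distance of the length-$n$ binary cyclic code generated by $h(x)$. Then the generalized bicycle code defined by $(f(x),p(x)f(x))$ has parameters $[[2n,2\deg(f(x)),d_{GB}]]$ with $$\min\Big\{\frac{(\mathrm{wt}(p)+\mathrm{wt}(p^{-1}))\,d}{m+\mathrm{wt}(p)\,\mathrm{wt}(p^{-1})},\ \frac{d}{m'}\Big\}\ \le\ d_{GB}\ \le\ \min\{\mathrm{wt}(p)+1,\ \mathrm{wt}(p^{-1})+1,\ \mathrm{wt}(s)+\mathrm{wt}(r)\},$$ where $m=\max\{\mathrm{wt}(p),\mathrm{wt}(p^{-1})\}$ and $m'$ may be taken to be either $\max\{\mathrm{wt}(r),\mathrm{wt}(s)\}$ or $\max\{\mathrm{wt}(r'),\mathrm{wt}(s')\}$. Moreover, $C_1\setminus C_2$ contains elements (non-trivial logical operators) of weights $\mathrm{wt}(p)+1$ and $\mathrm{wt}(s)+\mathrm{wt}(r)$.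
   Context: All polynomials are reduced modulo $x^n-1$ (representatives of degree $<n$) before taking weights; $\mathrm{wt}$ is the number of nonzero coefficients. The cyclic code generated by $h(x)$ is the ideal $\langle h(x)\rangle$ of $R_n=\mathbb{F}_2[x]/\langle x^n-1\rangle$, viewed in $\mathbb{F}_2^n$. The generalized bicycle (GB) code defined by $a(x),b(x)\in R_n$ is the CSS code on $2n$ qubits, vectors of $\mathbb{F}_2^{2n}$ being pairs $(u(x),v(x))$, with X-stabilizer space $C_2=\{(ca,cb):c\in R_n\}$, $C_1=\{(u,v):u b+v a=0\text{ in }R_n\}$, Z-stabilizer space $C_2'=\{(c\,b(x^{-1}),c\,a(x^{-1}))\}$ and $C_1'=\{(u,v):u\,a(x^{-1})+v\,b(x^{-1})=0\}$ ($x^{-1}=x^{n-1}$); its dimension is $\dim C_1-\dim C_2$ and its minimum distance $d_{GB}$ is the minimum Hamming weight of an element of $(C_1\setminus C_2)\cup(C_1'\setminus C_2')$. *)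

theory Defs
  imports "HOL-Computational_Algebra.Polynomial" "HOL-Library.Z2" "HOL-Library.Product_Plus"
begin

definition xn1 :: "nat \<Rightarrow> bit poly" where
  "xn1 n = monom 1 n - 1"

definition redn :: "nat \<Rightarrow> bit poly \<Rightarrow> bit poly" where
  "redn n p = p mod xn1 n"

definition wt :: "nat \<Rightarrow> bit poly \<Rightarrow> nat" where
  "wt n p = card {i. coeff (redn n p) i \<noteq> 0}"

definition Rn :: "nat \<Rightarrow> bit poly set" where
  "Rn n = {p. redn n p = p}"

text \<open>p(x^{-1}) in R_n, where x^{-1} = x^{n-1}.\<close>
definition conjx :: "nat \<Rightarrow> bit poly \<Rightarrow> bit poly" where
  "conjx n p = redn n (\<Sum>i<n. monom (coeff (redn n p) i) ((n - i) mod n))"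

definition cyclic_code :: "nat \<Rightarrow> bit poly \<Rightarrow> bit poly set" where
  "cyclic_code n h = {redn n (c * h) | c. True}"

definition min_dist :: "nat \<Rightarrow> bit poly \<Rightarrow> nat" where
  "min_dist n h = Inf {wt n u | u. u \<in> cyclic_code n h \<and> u \<noteq> 0}"

definition GB_C2 :: "nat \<Rightarrow> bit poly \<Rightarrow> bit poly \<Rightarrow> (bit poly \<times> bit poly) set" where
  "GB_C2 n a b = {(redn n (c * a), redn n (c * b)) | c. True}"

definition GB_C1 :: "nat \<Rightarrow> bit poly \<Rightarrow> bit poly \<Rightarrow> (bit poly \<times> bit poly) set" where
  "GB_C1 n a b = {(u, v). u \<in> Rn n \<and> v \<in> Rn n \<and> redn n (u * b + v * a) = 0}"

definition GB_C2' :: "nat \<Rightarrow> bit poly \<Rightarrow> bit poly \<Rightarrow> (bit poly \<times> bit poly) set" where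
  "GB_C2' n a b = {(redn n (c * conjx n b), redn n (c * conjx n a)) | c. True}"

definition GB_C1' :: "nat \<Rightarrow> bit poly \<Rightarrow> bit poly \<Rightarrow> (bit poly \<times> bit poly) set" where
  "GB_C1' n a b = {(u, v). u \<in> Rn n \<and> v \<in> Rn n \<and> redn n (u * conjx n a + v * conjx n b) = 0}"

definition pscale :: "bit \<Rightarrow> bit poly \<times> bit poly \<Rightarrow> bit poly \<times> bit poly" where
  "pscale c w = (smult c (fst w), smult c (snd w))"

definition fdim :: "(bit poly \<times> bit poly) set \<Rightarrow> nat" where
  "fdim S = vector_space.dim pscale S"

definition GB_dim :: "nat \<Rightarrow> bit poly \<Rightarrow> bit poly \<Rightarrow> nat" where
  "GB_dim n a b = fdim (GB_C1 n a b) - fdim (GB_C2 n a b)"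

definition wtv :: "nat \<Rightarrow> bit poly \<times> bit poly \<Rightarrow> nat" where
  "wtv n w = wt n (fst w) + wt n (snd w)"

definition GB_dist :: "nat \<Rightarrow> bit poly \<Rightarrow> bit poly \<Rightarrow> nat" where
  "GB_dist n a b = Inf {wtv n w | w. w \<in> (GB_C1 n a b - GB_C2 n a b) \<union> (GB_C1' n a b - GB_C2' n a b)}"

end

theory Submission
  imports Defs
begin

text \<open>
  Since \<open>f h = x\<^sup>n - 1\<close>, a pair \<open>(u, v)\<close> lies in \<open>C\<^sub>1\<close> iff \<open>h\<close> divides \<open>z = u p + v\<close>, i.e. iff
  \<open>z\<close> is a codeword of the cyclic code generated by \<open>h\<close>. If \<open>z \<noteq> 0\<close>, then \<open>z\<close> and
  \<open>p\<^sup>-\<^sup>1 z = u + v p\<^sup>-\<^sup>1\<close> are nonzero codewords, so \<open>d \<le> wt(u) wt(p) + wt(v)\<close> and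
  \<open>d \<le> wt(u) + wt(v) wt(p\<^sup>-\<^sup>1)\<close>; adding these with weights \<open>wt(p\<^sup>-\<^sup>1)\<close> and \<open>wt(p)\<close> gives
  the first lower bound. If \<open>z = 0\<close>, then \<open>v = u p\<close>, and \<open>(u, v) \<notin> C\<^sub>2\<close> means that \<open>f\<close> does
  not divide \<open>u\<close>, so \<open>u h\<close> and \<open>v h\<close> are nonzero codewords; expanding \<open>u h = u r + v s\<close>
  (or \<open>v h = v r' + u s'\<close>) gives \<open>d \<le> (wt(u) + wt(v)) max(wt(r), wt(s))\<close>.
  The substitution \<open>x \<mapsto> x\<^sup>-\<^sup>1\<close> maps \<open>C\<^sub>1' - C\<^sub>2'\<close> into \<open>C\<^sub>1 - C\<^sub>2\<close> preserving
  weights, so these bounds control all of \<open>d\<^sub>G\<^sub>B\<close>. The upper bounds are the weights of the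
  logical operators \<open>(1, p)\<close>, \<open>(p\<^sup>-\<^sup>1, 1)\<close> and \<open>(s, r)\<close>. As for the dimension,
  \<open>C\<^sub>2 \<cong> R\<^sub>n/(h)\<close> has dimension \<open>deg h = n - deg f\<close>, and
  \<open>C\<^sub>1 = {(u, u p + h q)}\<close> with \<open>deg q < deg f\<close> has dimension \<open>n + deg f\<close>.
\<close>

lemma add_self_bit_poly [simp]: "(a::bit poly) + a = 0"
proof -
  have "x + x = 0" for x :: bit by (cases x) simp_all
  then show ?thesis by (intro poly_eqI) (simp only: coeff_add coeff_0)
qed

lemma of_bool_eq_1_bit [simp]: "of_bool (b = (1::bit)) = b"
  by (cases b) simp_all

lemma diff_eq_add_bit_poly: "(a::bit poly) - b = a + b"
  by (simp add: poly_eq_iff)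

lemma add_eq_0_iff_bit_poly: "(a::bit poly) + b = 0 \<longleftrightarrow> a = b"
  by (metis add_self_bit_poly add_diff_cancel_left' diff_eq_add_bit_poly diff_self)

lemma poly_eq_sum_monom_lessThan:
  assumes "\<And>i. K \<le> i \<Longrightarrow> coeff c i = 0"
  shows "c = (\<Sum>i<K. monom (coeff c i) i)"
  using assms by (intro poly_eqI) (simp add: coeff_sum coeff_monom not_less)

lemma coeff_sum_monom_lessThan: "coeff (\<Sum>i<K. monom (c i) i) j = (if j < K then c j else 0)"
  by (simp add: coeff_sum coeff_monom)

lemma sum_monom_eq_0_imp: "(\<Sum>i<K. monom (c i) i) = 0 \<Longrightarrow> i < K \<Longrightarrow> c i = 0"
  by (metis coeff_0 coeff_sum_monom_lessThan)

lemma dvd_low_degree_eq_0: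
  fixes g c :: "'a::idom poly"
  assumes "g dvd c" and "g \<noteq> 0" and "\<And>i. degree g \<le> i \<Longrightarrow> coeff c i = 0"
  shows "c = 0"
proof (rule ccontr)
  assume "c \<noteq> 0"
  then have "coeff c (degree c) = 0"
    using assms(3) dvd_imp_degree_le[OF assms(1)] by simp
  with \<open>c \<noteq> 0\<close> show False by simp
qed

lemma support_sum_monom_subset:
  "{j. coeff (\<Sum>x\<in>A. monom (c x) (e x)) j \<noteq> 0} \<subseteq> e ` {x\<in>A. c x \<noteq> 0}"
proof
  fix j assume j: "j \<in> {j. coeff (\<Sum>x\<in>A. monom (c x) (e x)) j \<noteq> 0}"
  show "j \<in> e ` {x\<in>A. c x \<noteq> 0}"
  proof (rule ccontr)
    assume "j \<notin> e ` {x\<in>A. c x \<noteq> 0}"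
    then have "coeff (\<Sum>x\<in>A. monom (c x) (e x)) j = 0"
      unfolding coeff_sum by (intro sum.neutral) (auto simp: coeff_monom)
    then show False using j by simp
  qed
qed

lemma pcompose_monom: "pcompose (monom c i) q = smult c (q ^ i)"
proof (induction i)
  case (Suc i)
  have "monom c (Suc i) = [:0, 1:] * monom c i" by (simp add: monom_Suc)
  then show ?case using Suc by (simp add: pcompose_mult pcompose_pCons)
qed (simp add: monom_0)

lemma dvd_pcompose_diff: "z - z' dvd pcompose (a :: 'a::comm_ring_1 poly) z - pcompose a z'"
proof (induction a)
  case (pCons c a)
  have "pcompose (pCons c a) z - pcompose (pCons c a) z' =
        z * (pcompose a z - pcompose a z') + (z - z') * pcompose a z'"
    by (simp add: pcompose_pCons algebra_simps)
  then show ?case using pCons by simp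
qed simp

section \<open>Reduction modulo \<open>x\<^sup>n - 1\<close>\<close>

lemma degree_xn1: "n > 0 \<Longrightarrow> degree (xn1 n) = n"
proof -
  assume "n > 0"
  then have "degree (monom 1 n + - 1 :: bit poly) = n"
    by (subst degree_add_eq_left) (simp_all add: degree_monom_eq)
  then show ?thesis by (simp only: xn1_def diff_conv_add_uminus)
qed

lemma xn1_nonzero: "n > 0 \<Longrightarrow> xn1 n \<noteq> 0"
  using degree_xn1[of n] by auto

lemma xn1_dvd_monom_minus_1: "xn1 n dvd monom 1 (n * q) - 1"
proof -
  have "monom 1 n - 1 dvd (monom 1 n) ^ q - (1::bit poly)"
    by (subst power_diff_1_eq) simp
  then show ?thesis by (simp add: xn1_def monom_power)
qed

lemma redn_0 [simp]: "redn n 0 = 0"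
  by (simp add: redn_def)

lemma redn_idem [simp]: "redn n (redn n a) = redn n a"
  by (simp add: redn_def)

lemma redn_add: "redn n (a + b) = redn n a + redn n b"
  by (simp add: redn_def poly_mod_add_left)

lemma redn_mult_left [simp]: "redn n (redn n a * b) = redn n (a * b)"
  by (simp add: redn_def mod_mult_left_eq)

lemma redn_mult_right [simp]: "redn n (a * redn n b) = redn n (a * b)"
  by (simp add: redn_def mod_mult_right_eq)

lemma redn_smult: "redn n (smult c a) = smult c (redn n a)"
  by (simp add: redn_def mod_smult_left)

lemma redn_sum: "redn n (sum g A) = (\<Sum>x\<in>A. redn n (g x))"
  by (induction A rule: infinite_finite_induct) (auto simp: redn_add)

lemma redn_eq_0_iff: "redn n a = 0 \<longleftrightarrow> xn1 n dvd a"
  by (simp add: redn_def dvd_eq_mod_eq_0)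

lemma redn_eq_iff: "redn n a = redn n b \<longleftrightarrow> xn1 n dvd a + b"
  by (simp add: redn_def mod_eq_dvd_iff diff_eq_add_bit_poly)

lemma redn_id: "n > 0 \<Longrightarrow> degree a < n \<Longrightarrow> redn n a = a"
  by (simp add: redn_def mod_poly_less degree_xn1)

lemma redn_1 [simp]: "n > 0 \<Longrightarrow> redn n 1 = 1"
  by (simp add: redn_id)

lemma degree_redn_less: "n > 0 \<Longrightarrow> redn n a \<noteq> 0 \<Longrightarrow> degree (redn n a) < n"
  using degree_mod_less[of "xn1 n" a] by (auto simp: redn_def xn1_nonzero degree_xn1)

lemma coeff_redn_eq_0: "n > 0 \<Longrightarrow> n \<le> i \<Longrightarrow> coeff (redn n a) i = 0"
  using degree_redn_less[of n a] by (cases "redn n a = 0") (auto intro: coeff_eq_0)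

lemma redn_monom: "n > 0 \<Longrightarrow> redn n (monom c k) = monom c (k mod n)"
proof -
  assume n: "n > 0"
  have "monom c k - monom c (k mod n) = monom c (k mod n) * (monom 1 (n * (k div n)) - 1)"
    by (simp add: algebra_simps mult_monom)
  then have "xn1 n dvd monom c k + monom c (k mod n)"
    by (metis xn1_dvd_monom_minus_1 dvd_mult diff_eq_add_bit_poly)
  then have "redn n (monom c k) = redn n (monom c (k mod n))"
    by (simp add: redn_eq_iff)
  also have "\<dots> = monom c (k mod n)"
    using n by (cases "c = 0") (auto intro: redn_id simp: degree_monom_eq)
  finally show ?thesis .
qed

lemma redn_eq_sum_monom: "n > 0 \<Longrightarrow> redn n a = (\<Sum>i<n. monom (coeff (redn n a) i) i)"
  by (rule poly_eq_sum_monom_lessThan) (simp add: coeff_redn_eq_0)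

lemma support_redn_subset:
  assumes "n > 0" shows "{i. coeff (redn n a) i \<noteq> 0} \<subseteq> {..<n}"
proof
  fix i assume "i \<in> {i. coeff (redn n a) i \<noteq> 0}"
  then show "i \<in> {..<n}" using coeff_redn_eq_0[OF assms, of i a] by (meson lessThan_iff mem_Collect_eq not_le)
qed

lemma wt_redn [simp]: "wt n (redn n a) = wt n a"
  by (simp add: wt_def)

lemma wt_1 [simp]: "n > 0 \<Longrightarrow> wt n 1 = 1"
proof -
  have "{i. coeff (1::bit poly) i \<noteq> 0} = {0}" by (auto simp: coeff_1)
  then show "n > 0 \<Longrightarrow> wt n 1 = 1" by (simp add: wt_def)
qed

lemma wt_sum_monom_le:
  assumes n: "n > 0" and "finite A"
  shows "wt n (\<Sum>x\<in>A. monom (c x) (e x)) \<le> card {x\<in>A. c x \<noteq> 0}"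
proof -
  have "wt n (\<Sum>x\<in>A. monom (c x) (e x)) = card {j. coeff (\<Sum>x\<in>A. monom (c x) (e x mod n)) j \<noteq> 0}"
    by (simp add: wt_def redn_sum redn_monom[OF n])
  also have "\<dots> \<le> card ((\<lambda>x. e x mod n) ` {x\<in>A. c x \<noteq> 0})"
    by (intro card_mono support_sum_monom_subset) (use \<open>finite A\<close> in auto)
  also have "\<dots> \<le> card {x\<in>A. c x \<noteq> 0}"
    by (rule card_image_le) (use \<open>finite A\<close> in auto)
  finally show ?thesis .
qed

lemma wt_add_le: "n > 0 \<Longrightarrow> wt n (a + b) \<le> wt n a + wt n b"
proof -
  assume n: "n > 0"
  have "{i. coeff (redn n (a + b)) i \<noteq> 0} \<subseteq>
      {i. coeff (redn n a) i \<noteq> 0} \<union> {i. coeff (redn n b) i \<noteq> 0}"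
    by (auto simp: redn_add)
  moreover have "finite {i. coeff (redn n c) i \<noteq> 0}" for c
    using support_redn_subset[OF n] finite_subset by blast
  ultimately show ?thesis
    unfolding wt_def by (meson card_Un_le card_mono finite_UnI le_trans)
qed

lemma wt_mult_le: "n > 0 \<Longrightarrow> wt n (a * b) \<le> wt n a * wt n b"
proof -
  assume n: "n > 0"
  define ca cb where "ca = coeff (redn n a)" and "cb = coeff (redn n b)"
  have "redn n a * redn n b = (\<Sum>i<n. monom (ca i) i) * (\<Sum>j<n. monom (cb j) j)"
    using redn_eq_sum_monom[OF n] by (simp add: ca_def cb_def flip: redn_eq_sum_monom[OF n])
  also have "\<dots> = (\<Sum>x\<in>{..<n} \<times> {..<n}. monom (ca (fst x) * cb (snd x)) (fst x + snd x))"
    by (simp add: sum_product mult_monom sum.cartesian_product case_prod_beta)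
  finally have "wt n (a * b) = wt n (\<Sum>x\<in>{..<n} \<times> {..<n}. monom (ca (fst x) * cb (snd x)) (fst x + snd x))"
    by (metis redn_mult_left redn_mult_right wt_redn)
  also have "\<dots> \<le> card {x\<in>{..<n} \<times> {..<n}. ca (fst x) * cb (snd x) \<noteq> 0}"
    by (rule wt_sum_monom_le[OF n]) simp
  also have "{x\<in>{..<n} \<times> {..<n}. ca (fst x) * cb (snd x) \<noteq> 0} =
      {i\<in>{..<n}. ca i \<noteq> 0} \<times> {j\<in>{..<n}. cb j \<noteq> 0}"
    by auto
  also have "card \<dots> = wt n a * wt n b"
  proof -
    have "{i\<in>{..<n}. coeff (redn n c) i \<noteq> 0} = {i. coeff (redn n c) i \<noteq> 0}" for c
      using support_redn_subset[OF n, of c] by blast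
    then show ?thesis by (simp only: card_cartesian_product wt_def ca_def cb_def)
  qed
  finally show ?thesis .
qed

lemma min_dist_le_wt:
  assumes "h dvd w" and "redn n w \<noteq> 0"
  shows "min_dist n h \<le> wt n w"
proof -
  obtain c where "w = c * h" using assms(1) by (metis dvdE mult.commute)
  then have "wt n w \<in> {wt n u | u. u \<in> cyclic_code n h \<and> u \<noteq> 0}"
    using assms(2) unfolding cyclic_code_def by (metis (mono_tags, lifting) mem_Collect_eq wt_redn)
  then show ?thesis unfolding min_dist_def by (rule cInf_lower) simp
qed

lemma min_dist_le_split:
  assumes n: "n > 0" and nonzero: "redn n (x * h) \<noteq> 0"
    and split: "redn n (r + q * s) = redn n h"
  shows "min_dist n h \<le> wt n x * wt n r + wt n (x * q) * wt n s"
proof -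
  have "redn n (x * h) = redn n (x * r + (x * q) * s)"
    using arg_cong[OF split, of "\<lambda>y. redn n (x * y)"] by (simp add: algebra_simps)
  have "min_dist n h \<le> wt n (x * h)"
    using nonzero by (intro min_dist_le_wt) simp_all
  also have "\<dots> = wt n (x * r + (x * q) * s)"
    by (metis \<open>redn n (x * h) = _\<close> wt_redn)
  also have "\<dots> \<le> wt n x * wt n r + wt n (x * q) * wt n s"
    using wt_add_le[OF n] wt_mult_le[OF n] by (meson add_mono order_trans)
  finally show ?thesis .
qed

section \<open>The involution \<open>a(x) \<mapsto> a(x\<^sup>-\<^sup>1)\<close>\<close>

lemma pred_mult_mod: "i < (n::nat) \<Longrightarrow> ((n - 1) * i) mod n = (n - i) mod n"
proof (cases i)
  case (Suc j)
  assume "i < n"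
  then have "(n - 1) * i = (n - i) + j * n"
    using Suc by (simp add: algebra_simps diff_mult_distrib2)
  then show ?thesis by simp
qed simp

lemma redn_pcompose_monom_cong:
  assumes "redn n a = redn n b"
  shows "redn n (pcompose a (monom 1 k)) = redn n (pcompose b (monom 1 k))"
proof -
  obtain q where q: "a - b = xn1 n * q"
    using assms by (auto simp: redn_eq_iff simp flip: diff_eq_add_bit_poly elim: dvdE)
  have "pcompose (xn1 n) (monom 1 k) = monom 1 (n * k) - 1"
    by (simp add: xn1_def pcompose_diff pcompose_monom monom_power mult.commute pcompose_1)
  then have "xn1 n dvd pcompose (a - b) (monom 1 k)"
    by (simp add: q pcompose_mult xn1_dvd_monom_minus_1)
  then show ?thesis by (simp add: redn_eq_iff pcompose_diff flip: diff_eq_add_bit_poly)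
qed

lemma redn_pcompose_cong:
  assumes "redn n z = redn n z'"
  shows "redn n (pcompose a z) = redn n (pcompose a z')"
  using assms dvd_pcompose_diff[of z z' a] dvd_trans
  by (auto simp: redn_eq_iff simp flip: diff_eq_add_bit_poly)

lemma conjx_eq_redn_pcompose:
  assumes n: "n > 0"
  shows "conjx n a = redn n (pcompose a (monom 1 (n - 1)))"
proof -
  define c where "c = coeff (redn n a)"
  have "conjx n a = (\<Sum>i<n. monom (c i) ((n - i) mod n))"
    unfolding conjx_def c_def by (simp add: redn_sum redn_monom[OF n])
  also have "\<dots> = (\<Sum>i<n. monom (c i) (((n - 1) * i) mod n))"
    by (intro sum.cong refl) (metis lessThan_iff pred_mult_mod)
  also have "\<dots> = redn n (pcompose (\<Sum>i<n. monom (c i) i) (monom 1 (n - 1)))"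
    by (simp add: pcompose_sum pcompose_monom monom_power smult_monom mult.commute
        redn_sum redn_monom[OF n])
  also have "\<dots> = redn n (pcompose a (monom 1 (n - 1)))"
    by (rule redn_pcompose_monom_cong) (simp add: c_def flip: redn_eq_sum_monom[OF n])
  finally show ?thesis .
qed

lemma conjx_redn [simp]: "conjx n (redn n a) = conjx n a"
  by (simp add: conjx_def)

lemma redn_conjx [simp]: "redn n (conjx n a) = conjx n a"
  by (simp add: conjx_def)

lemma conjx_0 [simp]: "conjx n 0 = 0"
  by (simp add: conjx_def)

lemma conjx_add: "n > 0 \<Longrightarrow> conjx n (a + b) = conjx n a + conjx n b"
  by (simp add: conjx_eq_redn_pcompose pcompose_add redn_add)

lemma conjx_mult: "n > 0 \<Longrightarrow> conjx n (a * b) = redn n (conjx n a * conjx n b)"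
  by (simp add: conjx_eq_redn_pcompose pcompose_mult)

lemma conjx_conjx:
  assumes n: "n > 0"
  shows "conjx n (conjx n a) = redn n a"
proof -
  have "((n - 1) * (n - 1)) mod n = 1 mod n"
    using pred_mult_mod[of "n - 1" n] n by simp
  then have "redn n (monom 1 ((n - 1) * (n - 1))) = redn n (monom 1 1)"
    by (simp only: redn_monom[OF n])
  also have "monom (1::bit) 1 = [:0, 1:]"
    by (simp add: monom_Suc monom_0)
  finally have "redn n (monom 1 ((n - 1) * (n - 1))) = redn n [:0, 1:]" .
  then have "redn n (pcompose a (pcompose (monom 1 (n - 1)) (monom 1 (n - 1)))) = redn n a"
    using redn_pcompose_cong[of n _ "[:0, 1:]" a]
    by (simp add: pcompose_monom monom_power mult.commute)
  moreover have "conjx n (conjx n a) = redn n (pcompose (pcompose a (monom 1 (n - 1))) (monom 1 (n - 1)))"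
    unfolding conjx_eq_redn_pcompose[OF n] by (rule redn_pcompose_monom_cong) simp
  ultimately show ?thesis by (simp add: pcompose_assoc)
qed

lemma wt_conjx_le: "n > 0 \<Longrightarrow> wt n (conjx n a) \<le> wt n a"
proof -
  assume n: "n > 0"
  have "wt n (conjx n a) \<le> card {i\<in>{..<n}. coeff (redn n a) i \<noteq> 0}"
    unfolding conjx_def wt_redn by (rule wt_sum_monom_le[OF n]) simp
  also have "{i\<in>{..<n}. coeff (redn n a) i \<noteq> 0} = {i. coeff (redn n a) i \<noteq> 0}"
    using support_redn_subset[OF n, of a] by blast
  finally show ?thesis by (simp add: wt_def)
qed

lemma wt_conjx [simp]: "n > 0 \<Longrightarrow> wt n (conjx n a) = wt n a"
  using wt_conjx_le[of n a] wt_conjx_le[of n "conjx n a"] by (simp add: conjx_conjx)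

lemma GB_C1_conjx:
  assumes n: "n > 0" and uv: "(u, v) \<in> GB_C1' n a b - GB_C2' n a b"
  shows "(conjx n v, conjx n u) \<in> GB_C1 n a b - GB_C2 n a b"
proof -
  have u: "redn n u = u" and v: "redn n v = v"
    and uv0: "redn n (u * conjx n a + v * conjx n b) = 0"
    using uv by (auto simp: GB_C1'_def Rn_def)
  have "redn n (conjx n v * b + conjx n u * a) = conjx n (u * conjx n a + v * conjx n b)"
    by (simp add: conjx_add conjx_mult conjx_conjx redn_add n add.commute)
  then have "(conjx n v, conjx n u) \<in> GB_C1 n a b"
    using uv0 by (simp add: GB_C1_def Rn_def) (metis conjx_redn conjx_0)
  moreover have "(conjx n v, conjx n u) \<notin> GB_C2 n a b"
  proof
    assume "(conjx n v, conjx n u) \<in> GB_C2 n a b"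
    then obtain c where "conjx n v = redn n (c * a)" and "conjx n u = redn n (c * b)"
      by (auto simp: GB_C2_def)
    then have "conjx n (conjx n u) = redn n (conjx n c * conjx n b)"
      and "conjx n (conjx n v) = redn n (conjx n c * conjx n a)"
      by (simp_all add: conjx_mult n)
    then have "(u, v) \<in> GB_C2' n a b"
      using u v by (auto simp: GB_C2'_def conjx_conjx n)
    then show False using uv by simp
  qed
  ultimately show ?thesis by simp
qed

lemma wtv_conjx_swap: "n > 0 \<Longrightarrow> wtv n (conjx n v, conjx n u) = wtv n (u, v)"
  by (simp add: wtv_def)

lemma GB_dist_le:
  "w \<in> (GB_C1 n a b - GB_C2 n a b) \<union> (GB_C1' n a b - GB_C2' n a b) \<Longrightarrow> GB_dist n a b \<le> wtv n w"
  unfolding GB_dist_def by (rule cInf_lower) blast+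

lemma GB_dist_lower_bound:
  assumes n: "n > 0" and nonempty: "GB_C1 n a b - GB_C2 n a b \<noteq> {}"
    and bound: "\<And>w. w \<in> GB_C1 n a b - GB_C2 n a b \<Longrightarrow> B \<le> real (wtv n w)"
  shows "B \<le> real (GB_dist n a b)"
proof -
  let ?W = "{wtv n w | w. w \<in> (GB_C1 n a b - GB_C2 n a b) \<union> (GB_C1' n a b - GB_C2' n a b)}"
  have "Inf ?W \<in> ?W" using nonempty by (intro Inf_nat_def1) blast
  then obtain w where w: "w \<in> (GB_C1 n a b - GB_C2 n a b) \<union> (GB_C1' n a b - GB_C2' n a b)"
    and dist: "GB_dist n a b = wtv n w"
    unfolding GB_dist_def by blast
  show ?thesis
  proof (cases "w \<in> GB_C1 n a b - GB_C2 n a b")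
    case True
    then show ?thesis using bound dist by simp
  next
    case False
    then obtain u v where "w = (u, v)" "(u, v) \<in> GB_C1' n a b - GB_C2' n a b"
      using w by (cases w) blast
    then show ?thesis
      using bound[OF GB_C1_conjx[OF n]] dist by (simp add: wtv_conjx_swap n)
  qed
qed

locale gb_fpf =
  fixes n :: nat and f p :: "bit poly"
  assumes n: "n > 0" and f_dvd_xn1: "f dvd xn1 n"
begin

abbreviation "h \<equiv> xn1 n div f"
abbreviation "C1 \<equiv> GB_C1 n f (p * f)"
abbreviation "C2 \<equiv> GB_C2 n f (p * f)"

lemma f_mult_h: "f * h = xn1 n"
  using f_dvd_xn1 by simp

lemma f_nonzero: "f \<noteq> 0"
  using f_mult_h xn1_nonzero[OF n] by auto

lemma h_nonzero: "h \<noteq> 0"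
  using f_mult_h xn1_nonzero[OF n] by auto

lemma degree_f_add_degree_h: "degree f + degree h = n"
  using f_mult_h degree_mult_eq[OF f_nonzero h_nonzero] degree_xn1[OF n] by simp

lemma redn_mult_f_eq_0_iff: "redn n (w * f) = 0 \<longleftrightarrow> h dvd w"
proof -
  have "redn n (w * f) = 0 \<longleftrightarrow> h * f dvd w * f"
    unfolding redn_eq_0_iff by (metis f_mult_h mult.commute)
  then show ?thesis using f_nonzero by simp
qed

lemma h_dvd_redn_iff: "h dvd redn n w \<longleftrightarrow> h dvd w"
  using f_mult_h by (metis redn_def dvd_mod_iff dvd_triv_right)

lemma C1_iff: "(u, v) \<in> C1 \<longleftrightarrow> redn n u = u \<and> redn n v = v \<and> h dvd u * p + v"
  by (simp add: GB_C1_def Rn_def algebra_simps flip: redn_mult_f_eq_0_iff)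

end

section \<open>Dimension\<close>

interpretation pairs: vector_space pscale
  by unfold_locales (auto simp: pscale_def smult_add_right smult_add_left)

definition pair_mult :: "nat \<Rightarrow> bit poly \<Rightarrow> bit poly \<Rightarrow> bit poly \<Rightarrow> bit poly \<times> bit poly"
  where
  "pair_mult n a b c = (redn n (c * a), redn n (c * b))"

definition pair_mult_monoms :: "nat \<Rightarrow> bit poly \<Rightarrow> bit poly \<Rightarrow> nat \<Rightarrow> (bit poly \<times> bit poly) set"
  where
  "pair_mult_monoms n a b K = (\<lambda>i. pair_mult n a b (monom 1 i)) ` {..<K}"

lemma finite_pair_mult_monoms [simp]: "finite (pair_mult_monoms n a b K)"
  by (simp add: pair_mult_monoms_def)

lemma pair_mult_add: "pair_mult n a b (c + c') = pair_mult n a b c + pair_mult n a b c'"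
  by (simp add: pair_mult_def distrib_right redn_add)

lemma pair_mult_sum_monom:
  "pair_mult n a b (\<Sum>i<K. monom (\<phi> i) i) = (\<Sum>i<K. pscale (\<phi> i) (pair_mult n a b (monom 1 i)))"
  by (simp add: pair_mult_def pscale_def sum_prod sum_distrib_right redn_sum smult_monom_mult
      flip: redn_smult)

lemma pair_mult_in_span:
  assumes "\<And>i. K \<le> i \<Longrightarrow> coeff c i = 0"
  shows "pair_mult n a b c \<in> pairs.span (pair_mult_monoms n a b K)"
proof -
  have "pair_mult n a b c = pair_mult n a b (\<Sum>i<K. monom (coeff c i) i)"
    using poly_eq_sum_monom_lessThan[OF assms] by (rule arg_cong)
  also have "\<dots> = (\<Sum>i<K. pscale (coeff c i) (pair_mult n a b (monom 1 i)))"
    by (rule pair_mult_sum_monom)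
  also have "\<dots> \<in> pairs.span (pair_mult_monoms n a b K)"
    by (intro pairs.span_sum pairs.span_scale pairs.span_base) (simp add: pair_mult_monoms_def)
  finally show ?thesis .
qed

context
  fixes n K :: nat and a b :: "bit poly"
  assumes kernel:
    "\<And>c. (\<And>i. K \<le> i \<Longrightarrow> coeff c i = 0) \<Longrightarrow> pair_mult n a b c = 0 \<Longrightarrow> c = 0"
begin

lemma inj_on_pair_mult_monom: "inj_on (\<lambda>i. pair_mult n a b (monom 1 i)) {..<K}"
proof
  fix i j assume ij: "i \<in> {..<K}" "j \<in> {..<K}"
    and eq: "pair_mult n a b (monom 1 i) = pair_mult n a b (monom 1 j)"
  have "pair_mult n a b (monom 1 i + monom 1 j) = 0"
    by (simp only: pair_mult_add eq) (simp add: pair_mult_def zero_prod_def)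
  then have "monom 1 i + monom (1::bit) j = 0"
    using ij by (intro kernel) (auto simp: coeff_monom)
  then show "i = j" by (simp add: add_eq_0_iff_bit_poly monom_eq_iff')
qed

lemma sum_pscale_pair_mult_monoms:
  "(\<Sum>x\<in>pair_mult_monoms n a b K. pscale (\<phi> x) x) =
    pair_mult n a b (\<Sum>i<K. monom (\<phi> (pair_mult n a b (monom 1 i))) i)"
  by (simp add: pair_mult_monoms_def sum.reindex[OF inj_on_pair_mult_monom] pair_mult_sum_monom)

lemma card_pair_mult_monoms: "card (pair_mult_monoms n a b K) = K"
  by (simp add: pair_mult_monoms_def card_image[OF inj_on_pair_mult_monom])

lemma independent_pair_mult_monoms: "pairs.independent (pair_mult_monoms n a b K)"
proof (rule pairs.independent_if_scalars_zero)
  fix \<phi> x assume sum: "(\<Sum>x\<in>pair_mult_monoms n a b K. pscale (\<phi> x) x) = 0"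
    and x: "x \<in> pair_mult_monoms n a b K"
  have "(\<Sum>i<K. monom (\<phi> (pair_mult n a b (monom 1 i))) i) = 0"
    using sum by (intro kernel) (simp_all add: coeff_sum_monom_lessThan sum_pscale_pair_mult_monoms)
  then show "\<phi> x = 0"
    using x sum_monom_eq_0_imp by (auto simp: pair_mult_monoms_def)
qed simp

end

context gb_fpf
begin

lemma redn_mod_h_mult: "redn n ((c mod h) * (g * f)) = redn n (c * (g * f))"
proof -
  have "c mod h + c = c div h * h"
    using minus_mod_eq_div_mult[of c h] by (simp add: diff_eq_add_bit_poly add.commute)
  then have "(c mod h) * (g * f) + c * (g * f) = (c div h * g) * (f * h)"
    by (simp only: distrib_right[symmetric]) (simp add: ac_simps)
  then show ?thesis by (simp add: redn_eq_iff f_mult_h)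
qed

lemma kernel_pair_mult_f_pf:
  "(\<And>i. degree h \<le> i \<Longrightarrow> coeff c i = 0) \<Longrightarrow> pair_mult n f (p * f) c = 0 \<Longrightarrow> c = 0"
  by (rule dvd_low_degree_eq_0[OF _ h_nonzero]) (simp_all add: pair_mult_def zero_prod_def flip: redn_mult_f_eq_0_iff)

lemma dim_C2: "fdim C2 = degree h"
proof -
  have "C2 \<subseteq> pairs.span (pair_mult_monoms n f (p * f) (degree h))"
  proof
    fix w assume "w \<in> C2"
    then obtain c where "w = pair_mult n f (p * f) c"
      by (auto simp: GB_C2_def pair_mult_def)
    also have "\<dots> = pair_mult n f (p * f) (c mod h)"
      using redn_mod_h_mult[of c 1] redn_mod_h_mult[of c p] by (simp add: pair_mult_def)
    also have "\<dots> \<in> pairs.span (pair_mult_monoms n f (p * f) (degree h))"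
      using degree_mod_less[OF h_nonzero, of c] by (intro pair_mult_in_span) (auto intro: coeff_eq_0)
    finally show "w \<in> pairs.span (pair_mult_monoms n f (p * f) (degree h))" .
  qed
  moreover have "pair_mult_monoms n f (p * f) (degree h) \<subseteq> C2"
    by (auto simp: pair_mult_monoms_def pair_mult_def GB_C2_def)
  ultimately show ?thesis
    using pairs.basis_card_eq_dim[OF _ _ independent_pair_mult_monoms[OF kernel_pair_mult_f_pf]]
      card_pair_mult_monoms[OF kernel_pair_mult_f_pf]
    by (simp add: fdim_def)
qed

lemma pair_mult_1_p_in_C1: "pair_mult n 1 p c \<in> C1"
proof -
  have "redn n (redn n c * p + redn n (c * p)) = 0"
    by (simp add: redn_add)
  then show ?thesis
    by (simp add: C1_iff pair_mult_def flip: h_dvd_redn_iff)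
qed

lemma pair_mult_0_h_in_C1: "pair_mult n 0 h c \<in> C1"
  by (simp add: C1_iff pair_mult_def h_dvd_redn_iff)

lemma kernel_pair_mult_1_p:
  "(\<And>i. n \<le> i \<Longrightarrow> coeff c i = 0) \<Longrightarrow> pair_mult n 1 p c = 0 \<Longrightarrow> c = 0"
  by (rule dvd_low_degree_eq_0[of "xn1 n"])
    (simp_all add: pair_mult_def zero_prod_def xn1_nonzero[OF n] degree_xn1[OF n] flip: redn_eq_0_iff)

lemma kernel_pair_mult_0_h:
  "(\<And>i. degree f \<le> i \<Longrightarrow> coeff c i = 0) \<Longrightarrow> pair_mult n 0 h c = 0 \<Longrightarrow> c = 0"
proof (rule dvd_low_degree_eq_0[OF _ f_nonzero])
  assume "pair_mult n 0 h c = 0"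
  then have "f * h dvd c * h"
    by (simp add: pair_mult_def zero_prod_def redn_eq_0_iff f_mult_h)
  then show "f dvd c" using h_nonzero by simp
qed

\<comment> \<open>\<open>(u, v) \<in> C\<^sub>1\<close> iff \<open>v = u p + h q\<close> in \<open>R\<^sub>n\<close>, with \<open>u \<in> R\<^sub>n\<close> and \<open>deg q < deg f\<close>.\<close>
abbreviation "C1_basis \<equiv> pair_mult_monoms n 1 p n \<union> pair_mult_monoms n 0 h (degree f)"

lemma C1_subset_span: "C1 \<subseteq> pairs.span C1_basis"
proof
  fix w assume "w \<in> C1"
  then obtain u v where w: "w = (u, v)" and u: "redn n u = u" and v: "redn n v = v"
    and h_dvd: "h dvd u * p + v"
    by (cases w) (auto simp: C1_iff)
  define z where "z = v + redn n (u * p)"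
  have z: "redn n z = z" using v by (simp add: z_def redn_add)
  have "redn n z = redn n (u * p + v)" using v by (simp add: z_def redn_add add.commute)
  then have "h dvd z" using h_dvd z by (metis h_dvd_redn_iff)
  then obtain q where q: "z = h * q" by (rule dvdE)
  have q_low: "coeff q i = 0" if "degree f \<le> i" for i
  proof (cases "q = 0")
    case False
    then have "degree h + degree q < n"
      using degree_redn_less[OF n, of z] z q h_nonzero by (simp add: degree_mult_eq)
    then show ?thesis using that degree_f_add_degree_h by (intro coeff_eq_0) simp
  qed simp
  have "redn n (u * p) + z = v"
    unfolding z_def add.left_commute[of "redn n (u * p)" v] by simp
  moreover have "redn n (q * h) = z"
    using z q by (simp add: mult.commute)
  ultimately have "w = pair_mult n 1 p u + pair_mult n 0 h q"
    using u by (simp add: w pair_mult_def)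
  also have "\<dots> \<in> pairs.span C1_basis"
    using pair_mult_in_span[of n u] coeff_redn_eq_0[OF n, of _ u] u pair_mult_in_span[OF q_low]
    by (intro pairs.span_add) (auto intro: pairs.span_mono[THEN subsetD])
  finally show "w \<in> pairs.span C1_basis" .
qed

lemma independent_C1_basis: "pairs.independent C1_basis"
  and card_C1_basis: "card C1_basis = n + degree f"
proof -
  have disjoint: "pair_mult_monoms n 1 p n \<inter> pair_mult_monoms n 0 h (degree f) = {}"
    using n by (auto simp: pair_mult_monoms_def pair_mult_def redn_monom)
  show "card C1_basis = n + degree f"
    using card_pair_mult_monoms[of n n 1 p, OF kernel_pair_mult_1_p]
      card_pair_mult_monoms[of "degree f" n 0 h, OF kernel_pair_mult_0_h]
    by (simp add: card_Un_disjoint[OF _ _ disjoint])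
  show "pairs.independent C1_basis"
  proof (rule pairs.independent_if_scalars_zero)
    show "finite C1_basis" by simp
  next
    fix \<phi> x assume sum: "(\<Sum>x\<in>C1_basis. pscale (\<phi> x) x) = 0" and x: "x \<in> C1_basis"
    define U where "U = (\<Sum>i<n. monom (\<phi> (pair_mult n 1 p (monom 1 i))) i)"
    define V where "V = (\<Sum>i<degree f. monom (\<phi> (pair_mult n 0 h (monom 1 i))) i)"
    have "pair_mult n 1 p U + pair_mult n 0 h V = 0"
      using sum sum_pscale_pair_mult_monoms[of n n 1 p, OF kernel_pair_mult_1_p]
        sum_pscale_pair_mult_monoms[of "degree f" n 0 h, OF kernel_pair_mult_0_h]
      by (simp add: sum.union_disjoint[OF _ _ disjoint] U_def V_def)
    then have "redn n U = 0"
      by (simp add: pair_mult_def zero_prod_def)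
    then have "pair_mult n 1 p U = 0"
      by (simp add: pair_mult_def zero_prod_def flip: redn_mult_left)
    then have "U = 0" and "pair_mult n 0 h V = 0"
      using \<open>pair_mult n 1 p U + pair_mult n 0 h V = 0\<close>
      by (auto intro: kernel_pair_mult_1_p simp: U_def coeff_sum_monom_lessThan)
    moreover have "V = 0"
      using \<open>pair_mult n 0 h V = 0\<close>
      by (auto intro: kernel_pair_mult_0_h simp: V_def coeff_sum_monom_lessThan)
    ultimately show "\<phi> x = 0"
      using x sum_monom_eq_0_imp by (auto simp: U_def V_def pair_mult_monoms_def)
  qed
qed

lemma dim_C1: "fdim C1 = n + degree f"
proof -
  have "C1_basis \<subseteq> C1"
    using pair_mult_1_p_in_C1 pair_mult_0_h_in_C1 by (auto simp: pair_mult_monoms_def)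
  then show ?thesis
    using pairs.basis_card_eq_dim[OF _ C1_subset_span independent_C1_basis] card_C1_basis
    by (simp add: fdim_def)
qed

lemma GB_dim_f_pf: "GB_dim n f (p * f) = 2 * degree f"
  using degree_f_add_degree_h by (simp add: GB_dim_def dim_C1 dim_C2)

end

section \<open>Distance bounds\<close>

lemma real_div_le_of_le_mult: "(a::nat) \<le> w * c \<Longrightarrow> real a / real c \<le> real w"
  by (cases "c = 0") (simp_all add: divide_le_eq flip: of_nat_mult)

lemma add_mult_le_max: "(a::nat) * r + b * s \<le> (a + b) * max r s"
proof -
  have "a * r + b * s \<le> a * max r s + b * max r s" by (intro add_mono mult_left_mono) simp_all
  then show ?thesis by (simp add: distrib_right)
qed

lemma mult_le_of_two_bounds:
  fixes d a b P Q :: nat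
  assumes "d \<le> a * P + b" and "d \<le> a + b * Q"
  shows "(P + Q) * d \<le> (a + b) * (max P Q + P * Q)"
proof -
  have "(P + Q) * d = Q * d + P * d" by (simp add: algebra_simps)
  also have "\<dots> \<le> Q * (a * P + b) + P * (a + b * Q)"
    using assms by (intro add_mono mult_left_mono) simp_all
  also have "\<dots> = (a + b) * (P * Q) + (Q * b + P * a)" by (simp add: algebra_simps)
  also have "\<dots> \<le> (a + b) * (P * Q) + (max P Q * b + max P Q * a)"
    by (intro add_left_mono add_mono mult_right_mono) auto
  also have "\<dots> = (a + b) * (max P Q + P * Q)" by (simp add: algebra_simps)
  finally show ?thesis .
qed

locale gb_code = gb_fpf +
  fixes pinv :: "bit poly"
  assumes degree_f_pos: "degree f > 0" and p_pinv: "redn n (p * pinv) = 1"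
begin

abbreviation "d \<equiv> min_dist n h"

lemma redn_h: "redn n h = h"
  using degree_f_add_degree_h degree_f_pos by (intro redn_id n) simp

lemma redn_mult_p_pinv: "redn n (x * p * pinv) = redn n x"
  by (metis p_pinv mult.assoc mult_1_right redn_mult_right)

lemma redn_mult_f_ne_1: "redn n (c * f) \<noteq> 1"
proof
  assume "redn n (c * f) = 1"
  then have "f dvd c * f + 1"
    using f_dvd_xn1 n by (metis redn_1 redn_eq_iff dvd_trans)
  then have "f dvd 1" by (simp add: dvd_add_right_iff)
  then show False using degree_f_pos f_nonzero by (simp add: is_unit_iff_degree)
qed

lemma logical_op_1_p: "(1, redn n p) \<in> C1 - C2"
proof -
  have "redn n (1 * p + redn n p) = 0" by (simp add: redn_add)
  then have "(1, redn n p) \<in> C1" using n by (simp add: C1_iff flip: h_dvd_redn_iff)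
  moreover have "(1, redn n p) \<notin> C2" using redn_mult_f_ne_1 by (auto simp: GB_C2_def)
  ultimately show ?thesis by simp
qed

lemma logical_op_pinv_1: "(redn n pinv, 1) \<in> C1 - C2"
proof -
  have "redn n (redn n pinv * p + 1) = 0" using n p_pinv by (simp add: redn_add mult.commute)
  then have "(redn n pinv, 1) \<in> C1" using n by (simp add: C1_iff flip: h_dvd_redn_iff)
  moreover have "(redn n pinv, 1) \<notin> C2"
    using redn_mult_f_ne_1[of "c * p" for c] by (auto simp: GB_C2_def ac_simps)
  ultimately show ?thesis by simp
qed

lemma logical_op_s_r:
  assumes split: "redn n (r + p * s) = redn n h"
  shows "(redn n s, redn n r) \<in> C1 - C2"
proof -
  have "redn n (redn n s * p + redn n r) = h"
    using split redn_h by (simp add: redn_add ac_simps)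
  then have "(redn n s, redn n r) \<in> C1" by (simp add: C1_iff flip: h_dvd_redn_iff)
  moreover have "(redn n s, redn n r) \<notin> C2"
  proof
    assume "(redn n s, redn n r) \<in> C2"
    then obtain c where "redn n s = redn n (c * f)" and "redn n r = redn n (c * (p * f))"
      by (auto simp: GB_C2_def)
    then have "redn n (r + p * s) = 0"
      by (metis redn_add redn_mult_right add_self_bit_poly mult.left_commute)
    then show False using split redn_h h_nonzero by simp
  qed
  ultimately show ?thesis by simp
qed

lemma C1_weight_bound_nonzero_codeword:
  assumes uv: "(u, v) \<in> C1" and nonzero: "redn n (u * p + v) \<noteq> 0"
  shows "(wt n p + wt n pinv) * d \<le> (wt n u + wt n v) * (max (wt n p) (wt n pinv) + wt n p * wt n pinv)"
proof (rule mult_le_of_two_bounds)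
  have h_dvd: "h dvd u * p + v" using uv by (simp add: C1_iff)
  have "d \<le> wt n (u * p + v)" using h_dvd nonzero by (rule min_dist_le_wt)
  also have "\<dots> \<le> wt n (u * p) + wt n v" by (rule wt_add_le[OF n])
  also have "\<dots> \<le> wt n u * wt n p + wt n v" using wt_mult_le[OF n] by simp
  finally show "d \<le> wt n u * wt n p + wt n v" .
  have "redn n (u * p + v) = redn n (p * redn n (pinv * (u * p + v)))"
    using redn_mult_p_pinv[of "u * p + v"] by (simp add: ac_simps)
  then have "redn n (pinv * (u * p + v)) \<noteq> 0"
    using nonzero by (metis mult_zero_right redn_0)
  then have "d \<le> wt n (pinv * (u * p + v))"
    using h_dvd by (intro min_dist_le_wt) simp_all
  also have "redn n (pinv * (u * p + v)) = redn n (u + v * pinv)"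
    using redn_mult_p_pinv[of u] by (simp add: algebra_simps redn_add)
  then have "wt n (pinv * (u * p + v)) = wt n (u + v * pinv)"
    by (metis wt_redn)
  also have "\<dots> \<le> wt n u + wt n (v * pinv)" by (rule wt_add_le[OF n])
  also have "\<dots> \<le> wt n u + wt n v * wt n pinv" using wt_mult_le[OF n] by simp
  finally show "d \<le> wt n u + wt n v * wt n pinv" .
qed

lemma C1_minus_C2_zero_codeword:
  assumes uv: "(u, v) \<in> C1 - C2" and zero: "redn n (u * p + v) = 0"
  shows "redn n (u * p) = v" and "redn n (v * pinv) = u"
    and "redn n (u * h) \<noteq> 0" and "redn n (v * h) \<noteq> 0"
proof -
  have u: "redn n u = u" and v: "redn n v = v" using uv by (auto simp: C1_iff)
  show v_eq: "redn n (u * p) = v" using zero v by (simp add: redn_add add_eq_0_iff_bit_poly)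
  show u_eq: "redn n (v * pinv) = u"
    using u by (simp flip: v_eq add: redn_mult_p_pinv)
  show uh: "redn n (u * h) \<noteq> 0"
  proof
    assume "redn n (u * h) = 0"
    then have "f * h dvd u * h" by (simp add: redn_eq_0_iff f_mult_h)
    then have "f dvd u" using h_nonzero by simp
    then obtain c where "u = c * f" by (metis dvdE mult.commute)
    then have "(u, v) = (redn n (c * f), redn n (c * (p * f)))"
      using u v_eq by (simp add: ac_simps)
    then show False using uv by (auto simp: GB_C2_def)
  qed
  have "redn n (u * h) = redn n (pinv * redn n (v * h))"
    by (simp flip: u_eq add: ac_simps)
  then show "redn n (v * h) \<noteq> 0"
    using uh by (metis mult_zero_right redn_0)
qed

lemma C1_weight_bound_zero_codeword:
  assumes uv: "(u, v) \<in> C1 - C2" and zero: "redn n (u * p + v) = 0"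
    and split: "redn n (r + p * s) = redn n h \<or> redn n (r + pinv * s) = redn n h"
  shows "d \<le> (wt n u + wt n v) * max (wt n r) (wt n s)"
  using split
proof
  assume "redn n (r + p * s) = redn n h"
  then have "d \<le> wt n u * wt n r + wt n (u * p) * wt n s"
    using C1_minus_C2_zero_codeword(3)[OF uv zero] by (intro min_dist_le_split[OF n])
  also have "wt n (u * p) = wt n v"
    using C1_minus_C2_zero_codeword(1)[OF uv zero] by (metis wt_redn)
  finally show ?thesis using add_mult_le_max order_trans by blast
next
  assume "redn n (r + pinv * s) = redn n h"
  then have "d \<le> wt n v * wt n r + wt n (v * pinv) * wt n s"
    using C1_minus_C2_zero_codeword(4)[OF uv zero] by (intro min_dist_le_split[OF n])
  also have "wt n (v * pinv) = wt n u"
    using C1_minus_C2_zero_codeword(2)[OF uv zero] by (metis wt_redn)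
  finally show ?thesis
    using add_mult_le_max[of "wt n v" "wt n r" "wt n u" "wt n s"] by (metis add.commute order_trans)
qed

lemma wtv_lower_bound:
  assumes w: "w \<in> C1 - C2"
    and split: "redn n (r + p * s) = redn n h \<or> redn n (r + pinv * s) = redn n h"
  shows "min (real ((wt n p + wt n pinv) * d) / real (max (wt n p) (wt n pinv) + wt n p * wt n pinv))
      (real d / real (max (wt n r) (wt n s))) \<le> real (wtv n w)"
proof -
  obtain u v where uv: "w = (u, v)" by fastforce
  show ?thesis
  proof (cases "redn n (u * p + v) = 0")
    case True
    then have "real d / real (max (wt n r) (wt n s)) \<le> real (wtv n w)"
      using C1_weight_bound_zero_codeword[OF _ True split] w
      by (intro real_div_le_of_le_mult) (simp add: uv wtv_def)
    then show ?thesis by (rule min.coboundedI2)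
  next
    case False
    then have "real ((wt n p + wt n pinv) * d) / real (max (wt n p) (wt n pinv) + wt n p * wt n pinv)
        \<le> real (wtv n w)"
      using C1_weight_bound_nonzero_codeword[OF _ False] w
      by (intro real_div_le_of_le_mult) (simp add: uv wtv_def)
    then show ?thesis by (rule min.coboundedI1)
  qed
qed

lemma GB_dist_f_pf_ge:
  assumes "redn n (r + p * s) = redn n h \<or> redn n (r + pinv * s) = redn n h"
  shows "min (real ((wt n p + wt n pinv) * d) / real (max (wt n p) (wt n pinv) + wt n p * wt n pinv))
      (real d / real (max (wt n r) (wt n s))) \<le> real (GB_dist n f (p * f))"
  using logical_op_1_p wtv_lower_bound[OF _ assms] by (intro GB_dist_lower_bound[OF n]) blast+

lemma GB_dist_f_pf_le:
  assumes "redn n (r + p * s) = redn n h"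
  shows "GB_dist n f (p * f) \<le> min (wt n p + 1) (min (wt n pinv + 1) (wt n s + wt n r))"
  using GB_dist_le[of "(1, redn n p)" n f "p * f"] GB_dist_le[of "(redn n pinv, 1)" n f "p * f"]
    GB_dist_le[of "(redn n s, redn n r)" n f "p * f"] logical_op_1_p logical_op_pinv_1 logical_op_s_r[OF assms] n
  by (simp add: wtv_def)

end

theorem theorem3:
  fixes n :: nat and f p pinv r s r' s' :: "bit poly"
  assumes n: "n > 0"
    and fdvd: "f dvd xn1 n"
    and fdeg: "degree f > 0"
    and cop: "coprime p (xn1 n)"
    and pinv: "redn n (p * pinv) = 1"
    and rs: "redn n (r + p * s) = redn n (xn1 n div f)"
    and rs': "redn n (r' + pinv * s') = redn n (xn1 n div f)"
  defines "d \<equiv> min_dist n (xn1 n div f)"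
    and "m \<equiv> max (wt n p) (wt n pinv)"
    and "dGB \<equiv> GB_dist n f (p * f)"
  shows "(GB_dim n f (p * f) = 2 * degree f) \<and>
    (min (real ((wt n p + wt n pinv) * d) / real (m + wt n p * wt n pinv))
             (real d / real (max (wt n r) (wt n s))) \<le> real dGB) \<and>
    (min (real ((wt n p + wt n pinv) * d) / real (m + wt n p * wt n pinv))
             (real d / real (max (wt n r') (wt n s'))) \<le> real dGB) \<and>
    (dGB \<le> min (wt n p + 1) (min (wt n pinv + 1) (wt n s + wt n r))) \<and>
    (\<exists>w \<in> GB_C1 n f (p * f) - GB_C2 n f (p * f). wtv n w = wt n p + 1) \<and>
    (\<exists>w \<in> GB_C1 n f (p * f) - GB_C2 n f (p * f). wtv n w = wt n s + wt n r)"
proof -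
  interpret gb_code n f p pinv
    using n fdvd fdeg pinv by unfold_locales
  have "wtv n (1, redn n p) = wt n p + 1" and "wtv n (redn n s, redn n r) = wt n s + wt n r"
    using n by (simp_all add: wtv_def)
  then show ?thesis
    unfolding d_def m_def dGB_def
    using GB_dim_f_pf GB_dist_f_pf_ge[OF disjI1[OF rs]] GB_dist_f_pf_ge[OF disjI2[OF rs']]
      GB_dist_f_pf_le[OF rs] logical_op_1_p logical_op_s_r[OF rs]
    by blast
qed

end
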